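(* Let $g(x)=1-(1-x^2)^4$ for $|x|\le1$ and $g(x)=1$ otherwise, and let $D=([0,+\infty[\times\{2\})\cup(\{0\}\times]0,2])$. Then there exists a unique map $\Delta:]0,+\infty[\times]0,+\infty[\to D$ such that for every $(t,x)$, writing $\Delta(t,x)=(q_o,p_o)$, one has $\mathcal{F}_q(t,q_o,p_o)=x$ and $\mathcal{F}_q(s,q_o,p_o)>0$ for all $s\in]0,t[$. Moreover: (1) $\Delta$ is continuous; (2) if $\Delta(t_o,x_o)=(0,p_o)$, $\Delta(t_o,x_o')=(0,p_o')$ and $0<x_o<x_o'<q^\sharp(t_o)$, then $p_o<p_o'$; (3) for all $x\in]0,+\infty[$, $\lim_{t\to0+}\Delta(t,x)=(x,2)$.
   Context: $\mathcal{F}(t,q_o,p_o)=(\mathcal{F}_q,\mathcal{F}_p)(t,q_o,p_o)=(q(t),p(t))$, where $(q,p)$ is the global solution of $\dot q=p$, $\dot p=-g'(q)$ with $(q(0),p(0))=(q_o,p_o)$. $q^\sharp(t)=\mathcal{F}_q(t,0,2)$. *)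

theory Defs
  imports "HOL-Analysis.Analysis"
begin

definition g :: "real \<Rightarrow> real" where
  "g x = (if \<bar>x\<bar> \<le> 1 then 1 - (1 - x^2)^4 else 1)"

text \<open>Global solution of q' = p, p' = -g'(q) with initial data (qo,po) at time 0,
  evaluated at time t (the solution is unique since g' is Lipschitz).\<close>
definition is_sol :: "real \<Rightarrow> real \<Rightarrow> (real \<Rightarrow> real) \<Rightarrow> (real \<Rightarrow> real) \<Rightarrow> bool" where
  "is_sol qo po q p \<longleftrightarrow> q 0 = qo \<and> p 0 = po \<and>
     (\<forall>s. (q has_real_derivative p s) (at s) \<and>
          (p has_real_derivative - deriv g (q s)) (at s))"

definition flow :: "real \<Rightarrow> real \<Rightarrow> real \<Rightarrow> real \<times> real" where
  "flow t qo po = (THE z. \<exists>q p. is_sol qo po q p \<and> z = (q t, p t))"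

definition flow_q :: "real \<Rightarrow> real \<Rightarrow> real \<Rightarrow> real" where
  "flow_q t qo po = fst (flow t qo po)"

definition qsharp :: "real \<Rightarrow> real" where
  "qsharp t = flow_q t 0 2"

definition Dset :: "(real \<times> real) set" where
  "Dset = ({0..} \<times> {2}) \<union> ({0} \<times> {0<..2})"

definition good_Delta :: "(real \<times> real \<Rightarrow> real \<times> real) \<Rightarrow> bool" where
  "good_Delta \<Delta> \<longleftrightarrow> (\<forall>t x. 0 < t \<and> 0 < x \<longrightarrow>
      \<Delta> (t, x) \<in> Dset \<and>
      flow_q t (fst (\<Delta> (t, x))) (snd (\<Delta> (t, x))) = x \<and>
      (\<forall>s\<in>{0<..<t}. flow_q s (fst (\<Delta> (t, x))) (snd (\<Delta> (t, x))) > 0))"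

end

theory Submission
  imports Defs
begin

text \<open>
  The flow exists and is unique because the field (q, p) \<mapsto> (p, -g'(q)) is globally Lipschitz
  (Picard iteration, Gronwall). Parametrise Dset by arc length, c \<mapsto> Dset_param c for c > 0,
  and call c admissible for t if the trajectory from Dset_param c has positive position on ]0, t[.
  The key fact is strict monotonicity: if the trajectory of c1 is positive on ]0, t] and
  c1 < c2, then it stays strictly below the trajectory of c2 at time t. At a first meeting time
  the position gap closes from above, so the momentum of c2 is not larger; conversely the
  momentum of c2 is not smaller, by conservation of energy when c2 > 2 (its momentum never
  vanishes), and when c1, c2 \<le> 2 because the Wronskian q1 p2 - q2 p1 starts at 0 and is
  nondecreasing, g'(u)/u being nonincreasing. So the two states coincide, and uniqueness of the
  flow gives c1 = c2. Hence the admissible parameters form an up-set on which c \<mapsto> q(t)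
  increases strictly; its infimum is admissible with nonpositive position at t, and the
  intermediate value theorem yields the unique admissible parameter reaching x. Both
  "Delta_param t x < a" and "a < Delta_param t x" are equivalent to conditions that are open in
  (t, x), which gives continuity and the limit at t = 0.
\<close>

section \<open>Global flow of a globally Lipschitz autonomous field\<close>

definition ode_solution :: "('a::real_normed_vector \<Rightarrow> 'a) \<Rightarrow> (real \<Rightarrow> 'a) \<Rightarrow> bool" where
  "ode_solution f x \<longleftrightarrow> (\<forall>t. (x has_vector_derivative f (x t)) (at t))"

fun picard_iter :: "('a::banach \<Rightarrow> 'a) \<Rightarrow> 'a \<Rightarrow> nat \<Rightarrow> real \<Rightarrow> 'a" where
  "picard_iter f x0 0 t = x0"
| "picard_iter f x0 (Suc n) t = x0 + integral {0..t} (\<lambda>s. f (picard_iter f x0 n s))"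

declare picard_iter.simps(2) [simp del]

definition picard_limit :: "('a::banach \<Rightarrow> 'a) \<Rightarrow> 'a \<Rightarrow> real \<Rightarrow> 'a" where
  "picard_limit f x0 t = x0 + (\<Sum>n. picard_iter f x0 (Suc n) t - picard_iter f x0 n t)"

lemma continuous_on_picard_iter:
  assumes "continuous_on UNIV f"
  shows "continuous_on {0..T} (picard_iter f x0 n)"
proof (induction n)
  case (Suc n)
  then have "continuous_on {0..T} (\<lambda>s. f (picard_iter f x0 n s))"
    using continuous_on_compose2[OF assms] by blast
  then show ?case
    by (auto simp: picard_iter.simps(2)
        intro!: continuous_intros indefinite_integral_continuous_1 integrable_continuous_interval)
qed simp

lemma continuous_on_comp_picard_iter:
  assumes "continuous_on UNIV f"
  shows "continuous_on {0..T} (\<lambda>s. f (picard_iter f x0 n s))"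
  using continuous_on_compose2[OF assms continuous_on_picard_iter[OF assms]] by blast

lemma has_integral_scaled_power:
  fixes C L t :: real
  assumes "0 \<le> t"
  shows "((\<lambda>s. L * C * (L * s)^n / fact n) has_integral C * (L * t)^Suc n / fact (Suc n)) {0..t}"
proof -
  have "((\<lambda>s. L * C * (L * s)^n / fact n) has_integral
      C * (L * t)^Suc n / fact (Suc n) - C * (L * 0)^Suc n / fact (Suc n)) {0..t}"
  proof (rule fundamental_theorem_of_calculus[OF assms])
    fix s
    have "((\<lambda>s. C * (L * s)^Suc n / fact (Suc n)) has_real_derivative L * C * (L * s)^n / fact n) (at s)"
      by (rule derivative_eq_intros refl | simp add: fact_Suc field_simps del: of_nat_Suc)+
    then show "((\<lambda>s. C * (L * s)^Suc n / fact (Suc n)) has_vector_derivative L * C * (L * s)^n / fact n)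
        (at s within {0..t})"
      by (simp add: has_real_derivative_iff_has_vector_derivative has_vector_derivative_at_within)
  qed
  then show ?thesis by simp
qed

lemma norm_picard_iter_diff_le:
  assumes f: "L-lipschitz_on UNIV f" and t: "0 \<le> t" "t \<le> T"
  shows "norm (picard_iter f x0 (Suc n) t - picard_iter f x0 n t) \<le> norm (f x0) * T * (L * t)^n / fact n"
  using t
proof (induction n arbitrary: t)
  case 0
  then show ?case
    using mult_right_mono[of t T "norm (f x0)"] by (simp add: picard_iter.simps(2) mult.commute)
next
  case (Suc n)
  let ?C = "norm (f x0) * T"
  have cont: "continuous_on {0..t} (\<lambda>s. f (picard_iter f x0 k s))" for k
    using continuous_on_comp_picard_iter[OF lipschitz_on_continuous_on[OF f]] .
  have "norm (picard_iter f x0 (Suc (Suc n)) t - picard_iter f x0 (Suc n) t)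
      = norm (integral {0..t} (\<lambda>s. f (picard_iter f x0 (Suc n) s) - f (picard_iter f x0 n s)))"
    by (simp only: picard_iter.simps(2)[of f x0 "Suc n" t] picard_iter.simps(2)[of f x0 n t])
      (simp add: integral_diff integrable_continuous_interval cont)
  also have "\<dots> \<le> integral {0..t} (\<lambda>s. L * ?C * (L * s)^n / fact n)"
  proof (rule integral_norm_bound_integral)
    show "(\<lambda>s. f (picard_iter f x0 (Suc n) s) - f (picard_iter f x0 n s)) integrable_on {0..t}"
      by (intro integrable_diff integrable_continuous_interval cont)
    show "(\<lambda>s. L * ?C * (L * s)^n / fact n) integrable_on {0..t}"
      using has_integral_scaled_power Suc.prems by blast
    fix s assume s: "s \<in> {0..t}"
    have "norm (f (picard_iter f x0 (Suc n) s) - f (picard_iter f x0 n s))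
        \<le> L * norm (picard_iter f x0 (Suc n) s - picard_iter f x0 n s)"
      using lipschitz_on_normD[OF f] by blast
    also have "\<dots> \<le> L * (?C * (L * s)^n / fact n)"
      using Suc.IH[of s] s Suc.prems lipschitz_on_nonneg[OF f] by (intro mult_left_mono) auto
    finally show "norm (f (picard_iter f x0 (Suc n) s) - f (picard_iter f x0 n s)) \<le> L * ?C * (L * s)^n / fact n"
      by simp
  qed
  also have "\<dots> = ?C * (L * t)^Suc n / fact (Suc n)"
    using has_integral_scaled_power Suc.prems by blast
  finally show ?case .
qed

lemma uniform_limit_picard_iter:
  assumes f: "L-lipschitz_on UNIV f"
  shows "uniform_limit {0..T} (picard_iter f x0) (picard_limit f x0) sequentially"
proof -
  define M where "M n = norm (f x0) * T * (inverse (fact n) * (L * T)^n)" for n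
  have "norm (picard_iter f x0 (Suc n) t - picard_iter f x0 n t) \<le> M n" if "t \<in> {0..T}" for n t
  proof -
    note norm_picard_iter_diff_le[OF f, of t T x0 n]
    also have "norm (f x0) * T * (L * t)^n / fact n \<le> norm (f x0) * T * (L * T)^n / fact n"
      using that lipschitz_on_nonneg[OF f] by (intro divide_right_mono mult_left_mono power_mono) auto
    finally show ?thesis using that by (simp add: M_def field_simps)
  qed
  moreover have "summable M" unfolding M_def by (intro summable_mult summable_exp)
  ultimately have "uniform_limit {0..T} (\<lambda>n t. \<Sum>i<n. picard_iter f x0 (Suc i) t - picard_iter f x0 i t)
      (\<lambda>t. \<Sum>i. picard_iter f x0 (Suc i) t - picard_iter f x0 i t) sequentially"
    by (rule Weierstrass_m_test)
  then have "uniform_limit {0..T} (\<lambda>n t. x0 + (\<Sum>i<n. picard_iter f x0 (Suc i) t - picard_iter f x0 i t))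
      (picard_limit f x0) sequentially"
    unfolding picard_limit_def by (intro uniform_limit_intros)
  moreover have "x0 + (\<Sum>i<n. picard_iter f x0 (Suc i) t - picard_iter f x0 i t) = picard_iter f x0 n t" for n t
    by (simp add: sum_lessThan_telescope[of "\<lambda>i. picard_iter f x0 i t"])
  ultimately show ?thesis by simp
qed

lemma picard_limit_eq_integral:
  assumes f: "L-lipschitz_on UNIV f" and t: "0 \<le> t"
  shows "picard_limit f x0 t = x0 + integral {0..t} (\<lambda>s. f (picard_limit f x0 s))"
proof -
  have U: "uniform_limit {0..t} (picard_iter f x0) (picard_limit f x0) sequentially"
    using uniform_limit_picard_iter[OF f] .
  have "uniform_limit {0..t} (\<lambda>n s. f (picard_iter f x0 n s)) (\<lambda>s. f (picard_limit f x0 s)) sequentially"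
    using uniform_limit_compose_uniformly_continuous_on[OF U lipschitz_on_uniformly_continuous[OF f]] by simp
  then obtain I J where I: "\<And>n. ((\<lambda>s. f (picard_iter f x0 n s)) has_integral I n) {0..t}"
    and J: "((\<lambda>s. f (picard_limit f x0 s)) has_integral J) {0..t}" and IJ: "I \<longlonglongrightarrow> J"
    by (rule uniform_limit_integral)
      (auto intro: continuous_on_comp_picard_iter[OF lipschitz_on_continuous_on[OF f]])
  have "(\<lambda>n. picard_iter f x0 (Suc n) t) \<longlonglongrightarrow> x0 + J"
    using IJ I[THEN integral_unique] by (auto simp: picard_iter.simps(2) intro: tendsto_intros)
  moreover have "(\<lambda>n. picard_iter f x0 (Suc n) t) \<longlonglongrightarrow> picard_limit f x0 t"
    using LIMSEQ_Suc[OF tendsto_uniform_limitI[OF U, of t]] t by simp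
  ultimately show ?thesis
    using J[THEN integral_unique] LIMSEQ_unique by metis
qed

lemma picard_limit_has_vector_derivative:
  assumes f: "L-lipschitz_on UNIV f" and t: "0 \<le> t"
  shows "(picard_limit f x0 has_vector_derivative f (picard_limit f x0 t)) (at t within {0..})"
proof -
  have "continuous_on {0..t + 1} (picard_limit f x0)"
    using uniform_limit_theorem[OF _ uniform_limit_picard_iter[OF f]]
      continuous_on_picard_iter[OF lipschitz_on_continuous_on[OF f]] by simp
  then have "continuous_on {0..t + 1} (\<lambda>s. f (picard_limit f x0 s))"
    using continuous_on_compose2[OF lipschitz_on_continuous_on[OF f]] by blast
  then have "((\<lambda>u. x0 + integral {0..u} (\<lambda>s. f (picard_limit f x0 s))) has_vector_derivative
      f (picard_limit f x0 t)) (at t within {0..t + 1})"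
    using t by (auto intro!: derivative_eq_intros integral_has_vector_derivative)
  then have "(picard_limit f x0 has_vector_derivative f (picard_limit f x0 t)) (at t within {0..t + 1})"
    by (rule has_vector_derivative_transform[rotated 2]) (use t picard_limit_eq_integral[OF f] in auto)
  moreover have "at t within {0..t + 1} = at t within {0..}"
    by (rule at_within_nhd[where S="{..<t + 1}"]) (use t in auto)
  ultimately show ?thesis by simp
qed

lemma picard_limit_0 [simp]: "picard_limit f x0 0 = x0"
proof -
  have "picard_iter f x0 n 0 = x0" for n
    by (cases n) (simp_all add: picard_iter.simps(2))
  then show ?thesis by (simp add: picard_limit_def)
qed

definition ode_sol :: "('a::banach \<Rightarrow> 'a) \<Rightarrow> 'a \<Rightarrow> real \<Rightarrow> 'a" where
  "ode_sol f x0 t = (if 0 \<le> t then picard_limit f x0 t else picard_limit (\<lambda>x. - f x) x0 (- t))"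

lemma ode_sol_0 [simp]: "ode_sol f x0 0 = x0"
  by (simp add: ode_sol_def)

lemma ode_solution_ode_sol:
  assumes f: "L-lipschitz_on UNIV f"
  shows "ode_solution f (ode_sol f x0)"
  unfolding ode_solution_def
proof
  fix t :: real
  let ?x = "picard_limit f x0" and ?y = "\<lambda>t. picard_limit (\<lambda>x. - f x) x0 (- t)"
  have fw: "(?x has_vector_derivative f (?x t)) (at t within {0..})" if "0 \<le> t" for t
    using picard_limit_has_vector_derivative[OF f that] .
  have bw: "(?y has_vector_derivative f (?y t)) (at t within {..0})" if "t \<le> 0" for t
  proof -
    have "(picard_limit (\<lambda>x. - f x) x0 has_vector_derivative - f (?y t)) (at (- t) within uminus ` {..0})"
      using picard_limit_has_vector_derivative[of L "\<lambda>x. - f x" "- t" x0] f that by simp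
    then have "(picard_limit (\<lambda>x. - f x) x0 \<circ> uminus has_vector_derivative (- 1) *\<^sub>R - f (?y t))
        (at t within {..0})"
      by (rule vector_diff_chain_within[rotated]) (auto intro!: derivative_eq_intros)
    then show ?thesis by (simp add: o_def)
  qed
  have "((\<lambda>t. if t \<in> {0..} then ?x t else ?y t) has_vector_derivative
      (if t \<in> {0..} then f (?x t) else f (?y t))) (at t within UNIV)"
  proof (rule has_vector_derivative_If_within_closures[where T="{..<0}"])
    have "{0..} \<union> closure {0..} \<inter> closure {..<0} = {0::real..}"
      "{..<0} \<union> closure {0..} \<inter> closure {..<0} = {..0::real}" by auto
    then show "t \<in> {0..} \<union> closure {0..} \<inter> closure {..<0} \<Longrightarrow>
        (?x has_vector_derivative f (?x t)) (at t within {0..} \<union> closure {0..} \<inter> closure {..<0})"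
      "t \<in> {..<0} \<union> closure {0..} \<inter> closure {..<0} \<Longrightarrow>
        (?y has_vector_derivative f (?y t)) (at t within {..<0} \<union> closure {0..} \<inter> closure {..<0})"
      using fw bw by auto
  qed auto
  moreover have "ode_sol f x0 = (\<lambda>t. if t \<in> {0..} then ?x t else ?y t)"
    by (auto simp: ode_sol_def fun_eq_iff)
  ultimately show "(ode_sol f x0 has_vector_derivative f (ode_sol f x0 t)) (at t)"
    by (simp add: if_distrib)
qed

lemma abs_deriv_le_imp_exp_bound:
  fixes w w' :: "real \<Rightarrow> real"
  assumes w: "\<And>s. (w has_real_derivative w' s) (at s)" and bound: "\<And>s. \<bar>w' s\<bar> \<le> K * w s"
  shows "w t \<le> exp (K * \<bar>t - t0\<bar>) * w t0"
proof (cases "t0 \<le> t")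
  case True
  have "exp (- K * t) * w t \<le> exp (- K * t0) * w t0"
  proof (rule DERIV_nonpos_imp_nonincreasing[where f="\<lambda>s. exp (- K * s) * w s", OF True])
    fix s assume "t0 \<le> s" "s \<le> t"
    have "((\<lambda>s. exp (- K * s) * w s) has_real_derivative exp (- K * s) * (w' s - K * w s)) (at s)"
      by (rule derivative_eq_intros w refl)+ (simp add: algebra_simps)
    moreover have "exp (- K * s) * (w' s - K * w s) \<le> 0"
      using bound[of s] by (intro mult_nonneg_nonpos) auto
    ultimately show "\<exists>y. ((\<lambda>s. exp (- K * s) * w s) has_real_derivative y) (at s) \<and> y \<le> 0"
      by blast
  qed
  then have "exp (K * t) * (exp (- K * t) * w t) \<le> exp (K * t) * (exp (- K * t0) * w t0)"
    by (rule mult_left_mono) simp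
  then show ?thesis
    using True by (simp add: mult.assoc[symmetric] exp_add[symmetric] right_diff_distrib)
next
  case False
  have "exp (K * t) * w t \<le> exp (K * t0) * w t0"
  proof (rule DERIV_nonneg_imp_nondecreasing[where f="\<lambda>s. exp (K * s) * w s"])
    show "t \<le> t0" using False by simp
    fix s assume "t \<le> s" "s \<le> t0"
    have "((\<lambda>s. exp (K * s) * w s) has_real_derivative exp (K * s) * (w' s + K * w s)) (at s)"
      by (rule derivative_eq_intros w refl)+ (simp add: algebra_simps)
    moreover have "0 \<le> exp (K * s) * (w' s + K * w s)"
      using bound[of s] by (intro mult_nonneg_nonneg) auto
    ultimately show "\<exists>y. ((\<lambda>s. exp (K * s) * w s) has_real_derivative y) (at s) \<and> 0 \<le> y"
      by blast
  qed
  then have "exp (- K * t) * (exp (K * t) * w t) \<le> exp (- K * t) * (exp (K * t0) * w t0)"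
    by (rule mult_left_mono) simp
  then show ?thesis
    using False by (simp add: mult.assoc[symmetric] exp_add[symmetric] right_diff_distrib)
qed

lemma ode_solution_dist_le:
  fixes f :: "'a::real_inner \<Rightarrow> 'a"
  assumes f: "L-lipschitz_on UNIV f" and x: "ode_solution f x" and y: "ode_solution f y"
  shows "norm (x t - y t) \<le> exp (L * \<bar>t - t0\<bar>) * norm (x t0 - y t0)"
proof -
  define u where "u s = x s - y s" for s
  define w' where "w' s = 2 * inner (u s) (f (x s) - f (y s))" for s
  have "((\<lambda>s. inner (u s) (u s)) has_real_derivative w' s) (at s)" for s
  proof -
    have "(u has_vector_derivative f (x s) - f (y s)) (at s)"
      using x y unfolding ode_solution_def u_def by (auto intro: derivative_intros)
    then have u': "(u has_derivative (\<lambda>h. h *\<^sub>R (f (x s) - f (y s)))) (at s)"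
      by (simp add: has_vector_derivative_def)
    have "((\<lambda>s. inner (u s) (u s)) has_derivative (\<lambda>h. inner (u s) (h *\<^sub>R (f (x s) - f (y s)))
        + inner (h *\<^sub>R (f (x s) - f (y s))) (u s))) (at s)"
      using has_derivative_inner[OF u' u'] .
    then show ?thesis
      unfolding has_field_derivative_def w'_def
      by (rule has_derivative_eq_rhs) (simp add: fun_eq_iff inner_commute)
  qed
  moreover have "\<bar>w' s\<bar> \<le> (2 * L) * inner (u s) (u s)" for s
  proof -
    have "\<bar>w' s\<bar> \<le> 2 * (norm (u s) * norm (f (x s) - f (y s)))"
      unfolding w'_def using Cauchy_Schwarz_ineq2 by (simp add: abs_mult)
    also have "\<dots> \<le> 2 * (norm (u s) * (L * norm (u s)))"
      using lipschitz_on_normD[OF f] by (intro mult_left_mono) (auto simp: u_def)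
    also have "\<dots> = 2 * L * inner (u s) (u s)"
      by (simp add: power2_norm_eq_inner[symmetric] power2_eq_square)
    finally show ?thesis .
  qed
  ultimately have "inner (u t) (u t) \<le> exp (2 * L * \<bar>t - t0\<bar>) * inner (u t0) (u t0)"
    by (rule abs_deriv_le_imp_exp_bound)
  also have "exp (2 * L * \<bar>t - t0\<bar>) = (exp (L * \<bar>t - t0\<bar>))\<^sup>2"
    by (simp add: power2_eq_square exp_add[symmetric])
  finally have "(norm (u t))\<^sup>2 \<le> (exp (L * \<bar>t - t0\<bar>) * norm (u t0))\<^sup>2"
    by (simp add: power2_norm_eq_inner power_mult_distrib)
  then show ?thesis
    unfolding u_def by (rule power2_le_imp_le) simp
qed

lemma ode_solution_eq_ode_sol:
  fixes f :: "'a::{real_inner,banach} \<Rightarrow> 'a"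
  assumes f: "L-lipschitz_on UNIV f" and x: "ode_solution f x"
  shows "x t = ode_sol f (x 0) t"
proof -
  have "norm (x t - ode_sol f (x 0) t) \<le> exp (L * \<bar>t - 0\<bar>) * norm (x 0 - ode_sol f (x 0) 0)"
    by (rule ode_solution_dist_le[OF f x ode_solution_ode_sol[OF f]])
  then show ?thesis by simp
qed

lemma norm_ode_sol_diff_le:
  fixes f :: "'a::{real_inner,banach} \<Rightarrow> 'a"
  assumes f: "L-lipschitz_on UNIV f"
  shows "norm (ode_sol f x0 t - ode_sol f y0 t) \<le> exp (L * \<bar>t\<bar>) * norm (x0 - y0)"
proof -
  have "norm (ode_sol f x0 t - ode_sol f y0 t) \<le> exp (L * \<bar>t - 0\<bar>) * norm (ode_sol f x0 0 - ode_sol f y0 0)"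
    by (rule ode_solution_dist_le[OF f ode_solution_ode_sol[OF f] ode_solution_ode_sol[OF f]])
  then show ?thesis by simp
qed

lemma ode_sol_inj:
  fixes f :: "'a::{real_inner,banach} \<Rightarrow> 'a"
  assumes f: "L-lipschitz_on UNIV f" and eq: "ode_sol f x0 t = ode_sol f y0 t"
  shows "x0 = y0"
proof -
  have "norm (ode_sol f x0 0 - ode_sol f y0 0) \<le> exp (L * \<bar>0 - t\<bar>) * norm (ode_sol f x0 t - ode_sol f y0 t)"
    by (rule ode_solution_dist_le[OF f ode_solution_ode_sol[OF f] ode_solution_ode_sol[OF f]])
  then show ?thesis using eq by simp
qed

section \<open>The potential and the Newton system\<close>

definition dg :: "real \<Rightarrow> real" where
  "dg u = (if \<bar>u\<bar> \<le> 1 then 8 * u * (1 - u\<^sup>2)^3 else 0)"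

lemma g_eq_max: "g x = 1 - (max 0 (1 - x\<^sup>2))^4"
  and dg_eq_max: "dg x = 8 * x * (max 0 (1 - x\<^sup>2))^3"
  unfolding g_def dg_def using abs_square_le_1[of x] by (auto simp: max_def)

lemma DERIV_max_0_power4: "((\<lambda>u::real. (max 0 u)^4) has_real_derivative 4 * (max 0 u)^3) (at u)"
proof -
  consider "u < 0" | "u = 0" | "u > 0" by linarith
  then show ?thesis
  proof cases
    case 1
    have "\<forall>\<^sub>F y in nhds u. y \<in> {..<0}"
      by (rule eventually_nhds_in_open) (use 1 in auto)
    then have ev: "\<forall>\<^sub>F y in nhds u. (max 0 y)^4 = 0"
      by eventually_elim simp
    show ?thesis using 1 by (subst DERIV_cong_ev[OF refl ev refl]) auto
  next
    case 2
    have "norm ((max 0 y)^4 / y) \<le> \<bar>y\<bar>^3" for y :: real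
    proof (cases "y \<le> 0")
      case False
      then show ?thesis by (simp add: power4_eq_xxxx power3_eq_cube)
    qed simp
    then have "\<forall>\<^sub>F y in at 0. norm ((max 0 y)^4 / y) \<le> \<bar>y\<bar>^3"
      by (intro always_eventually allI)
    moreover have "((\<lambda>y. \<bar>y\<bar>^3) \<longlongrightarrow> 0) (at (0::real))"
      by (rule tendsto_eq_intros refl | simp)+
    ultimately have "((\<lambda>y. (max 0 y)^4 / y) \<longlongrightarrow> 0) (at (0::real))"
      by (rule Lim_null_comparison)
    then show ?thesis using 2 by (simp add: has_field_derivative_iff)
  next
    case 3
    have "\<forall>\<^sub>F y in nhds u. y \<in> {0<..}"
      by (rule eventually_nhds_in_open) (use 3 in auto)
    then have ev: "\<forall>\<^sub>F y in nhds u. (max 0 y)^4 = y^4"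
      by eventually_elim simp
    have "((\<lambda>y. y^4) has_real_derivative 4 * u^3) (at u)"
      by (rule derivative_eq_intros refl | simp)+
    then show ?thesis using 3 by (subst DERIV_cong_ev[OF refl ev refl]) auto
  qed
qed

lemma g_has_real_derivative: "(g has_real_derivative dg x) (at x)"
proof -
  have "((\<lambda>x. 1 - (max 0 (1 - x\<^sup>2))^4) has_real_derivative
      0 - 4 * (max 0 (1 - x\<^sup>2))^3 * (0 - 2 * x)) (at x)"
    by (rule derivative_eq_intros DERIV_chain2[OF DERIV_max_0_power4] refl | simp)+
  then show ?thesis
    unfolding g_eq_max[abs_def] dg_eq_max by (simp add: algebra_simps)
qed

lemma deriv_g: "deriv g x = dg x"
  using g_has_real_derivative by (rule DERIV_imp_deriv)

lemma lipschitz_dg: "48-lipschitz_on UNIV dg"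
proof -
  define P :: "real \<Rightarrow> real" where "P u = 8 * u * (1 - u\<^sup>2)^3" for u
  define P' :: "real \<Rightarrow> real" where "P' u = 8 * (1 - u\<^sup>2)^3 - 48 * u\<^sup>2 * (1 - u\<^sup>2)\<^sup>2" for u
  have "\<bar>P' u\<bar> \<le> 48" if "u \<in> {-1..1}" for u
  proof -
    have "0 \<le> 1 - u\<^sup>2" "1 - u\<^sup>2 \<le> 1" "u\<^sup>2 \<le> 1"
      using that by (auto simp: abs_square_le_1)
    then have "0 \<le> (1 - u\<^sup>2)^3" "(1 - u\<^sup>2)^3 \<le> 1" "0 \<le> u\<^sup>2 * (1 - u\<^sup>2)\<^sup>2" "u\<^sup>2 * (1 - u\<^sup>2)\<^sup>2 \<le> 1"
      by (auto simp: power_le_one mult_le_one)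
    then show ?thesis unfolding P'_def by linarith
  qed
  moreover have "(P has_real_derivative P' u) (at u within {-1..1})" for u
    unfolding P_def P'_def
    by (rule derivative_eq_intros refl | simp add: algebra_simps power2_eq_square power3_eq_cube)+
  ultimately have "norm (P x - P y) \<le> 48 * norm (x - y)" if "x \<in> {-1..1}" "y \<in> {-1..1}" for x y
    using that by (intro field_differentiable_bound[of "{-1..1}" P P']) auto
  then have "48-lipschitz_on {-1..1} P"
    by (intro lipschitz_onI) (auto simp: dist_real_def)
  then have "48-lipschitz_on (range (\<lambda>u. max (-1) (min 1 u))) P"
    by (rule lipschitz_on_subset) auto
  moreover have "1-lipschitz_on UNIV (\<lambda>u::real. max (-1) (min 1 u))"
    by (rule lipschitz_onI) (auto simp: dist_real_def)
  ultimately have "(48 * 1)-lipschitz_on UNIV (\<lambda>u. P (max (-1) (min 1 u)))"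
    by (intro lipschitz_on_compose2)
  moreover have "P (max (-1) (min 1 u)) = dg u" for u
    unfolding P_def dg_def by (auto simp: abs_if)
  ultimately show ?thesis by simp
qed

lemma abs_dg_le: "\<bar>dg u\<bar> \<le> 8"
proof (cases "\<bar>u\<bar> \<le> 1")
  case True
  then have "0 \<le> 1 - u\<^sup>2" "1 - u\<^sup>2 \<le> 1" by (auto simp: abs_square_le_1)
  then have "\<bar>u\<bar> * (1 - u\<^sup>2)^3 \<le> 1"
    using True by (intro mult_le_one) (auto simp: power_le_one)
  then show ?thesis using True \<open>0 \<le> 1 - u\<^sup>2\<close> unfolding dg_def by (simp add: abs_mult)
qed (simp add: dg_def)

lemma mult_dg_le:
  assumes "0 \<le> a" "a \<le> b"
  shows "a * dg b \<le> b * dg a"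
proof -
  have "a\<^sup>2 \<le> b\<^sup>2" using assms by (intro power_mono) auto
  then have "(max 0 (1 - b\<^sup>2))^3 \<le> (max 0 (1 - a\<^sup>2))^3"
    by (intro power_mono) auto
  then have "8 * a * b * (max 0 (1 - b\<^sup>2))^3 \<le> 8 * a * b * (max 0 (1 - a\<^sup>2))^3"
    using assms by (intro mult_left_mono) auto
  then show ?thesis by (simp add: dg_eq_max mult_ac)
qed

lemma g_nonneg: "0 \<le> g x"
  unfolding g_eq_max using power_le_one[of "max 0 (1 - x\<^sup>2)" 4] by (auto simp: abs_square_le_1)

lemma g_le_one: "g x \<le> 1"
  unfolding g_eq_max by simp

lemma g_0 [simp]: "g 0 = 0"
  by (simp add: g_def)

lemma g_mono:
  assumes "0 \<le> a" "a \<le> b"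
  shows "g a \<le> g b"
proof -
  have "a\<^sup>2 \<le> b\<^sup>2" using assms by (intro power_mono) auto
  then have "(max 0 (1 - b\<^sup>2))^4 \<le> (max 0 (1 - a\<^sup>2))^4"
    by (intro power_mono) auto
  then show ?thesis unfolding g_eq_max by simp
qed

lemma min_square_le_g: "min (x\<^sup>2) 1 \<le> g x"
proof (cases "\<bar>x\<bar> \<le> 1")
  case True
  then have "0 \<le> 1 - x\<^sup>2" "1 - x\<^sup>2 \<le> 1" by (auto simp: abs_square_le_1)
  then have "(1 - x\<^sup>2)^4 \<le> (1 - x\<^sup>2)^1" by (intro power_decreasing) auto
  then show ?thesis using True unfolding g_def by auto
qed (simp add: g_def)

definition newton_field :: "real \<times> real \<Rightarrow> real \<times> real" where
  "newton_field z = (snd z, - dg (fst z))"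

lemma lipschitz_newton_field: "49-lipschitz_on UNIV newton_field"
proof (rule lipschitz_on_mono)
  have "1-lipschitz_on UNIV (fst :: real \<times> real \<Rightarrow> real)"
    by (rule lipschitz_onI) (auto simp: dist_fst_le)
  then have "(48 * 1)-lipschitz_on UNIV (\<lambda>z::real \<times> real. dg (fst z))"
    using lipschitz_on_subset[OF lipschitz_dg subset_UNIV] by (rule lipschitz_on_compose2)
  moreover have "1-lipschitz_on UNIV (snd :: real \<times> real \<Rightarrow> real)"
    by (rule lipschitz_onI) (auto simp: dist_snd_le)
  ultimately show "(sqrt (1\<^sup>2 + (48 * 1)\<^sup>2))-lipschitz_on UNIV newton_field"
    unfolding newton_field_def[abs_def] by (intro lipschitz_on_Pair lipschitz_on_minus)
  show "sqrt (1\<^sup>2 + (48 * 1)\<^sup>2) \<le> (49::real)"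
    by (rule real_le_lsqrt) auto
qed simp

definition hamiltonian :: "real \<times> real \<Rightarrow> real" where
  "hamiltonian z = (snd z)\<^sup>2 / 2 + g (fst z)"

lemma has_vector_derivative_fst:
  "(x has_vector_derivative v) F \<Longrightarrow> ((\<lambda>s. fst (x s)) has_vector_derivative fst v) F"
  and has_vector_derivative_snd:
  "(x has_vector_derivative v) F \<Longrightarrow> ((\<lambda>s. snd (x s)) has_vector_derivative snd v) F"
  unfolding has_vector_derivative_def by (auto dest: has_derivative_fst has_derivative_snd)

lemma ode_solution_newton_field_iff:
  "ode_solution newton_field x \<longleftrightarrow>
    (\<forall>s. ((\<lambda>s. fst (x s)) has_real_derivative snd (x s)) (at s) \<and>
         ((\<lambda>s. snd (x s)) has_real_derivative - dg (fst (x s))) (at s))"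
proof -
  have "(x has_vector_derivative (a, b)) (at s) \<longleftrightarrow>
      ((\<lambda>s. fst (x s)) has_vector_derivative a) (at s) \<and> ((\<lambda>s. snd (x s)) has_vector_derivative b) (at s)"
    for s a b
    using has_vector_derivative_Pair[of "\<lambda>s. fst (x s)" a s UNIV "\<lambda>s. snd (x s)" b]
      has_vector_derivative_fst[of x "(a, b)"] has_vector_derivative_snd[of x "(a, b)"] by auto
  then show ?thesis
    by (simp add: ode_solution_def newton_field_def has_real_derivative_iff_has_vector_derivative)
qed

lemma flow_eq_ode_sol: "flow t a b = ode_sol newton_field (a, b) t"
  unfolding flow_def
proof (rule the_equality)
  let ?x = "ode_sol newton_field (a, b)"
  have "ode_solution newton_field ?x"
    by (rule ode_solution_ode_sol[OF lipschitz_newton_field])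
  then show "\<exists>q p. is_sol a b q p \<and> ?x t = (q t, p t)"
    by (intro exI[of _ "\<lambda>s. fst (?x s)"] exI[of _ "\<lambda>s. snd (?x s)"])
      (simp add: is_sol_def deriv_g ode_solution_newton_field_iff)
next
  fix z assume "\<exists>q p. is_sol a b q p \<and> z = (q t, p t)"
  then obtain q p where "is_sol a b q p" and z: "z = (q t, p t)" by blast
  then have "ode_solution newton_field (\<lambda>s. (q s, p s))" and "q 0 = a" "p 0 = b"
    by (simp_all add: is_sol_def deriv_g ode_solution_newton_field_iff)
  then show "z = ode_sol newton_field (a, b) t"
    using ode_solution_eq_ode_sol[OF lipschitz_newton_field, of "\<lambda>s. (q s, p s)" t] z by simp
qed

lemma hamiltonian_ode_sol: "hamiltonian (ode_sol newton_field z t) = hamiltonian z"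
proof -
  let ?q = "\<lambda>s. fst (ode_sol newton_field z s)" and ?p = "\<lambda>s. snd (ode_sol newton_field z s)"
  have "ode_solution newton_field (ode_sol newton_field z)"
    by (rule ode_solution_ode_sol[OF lipschitz_newton_field])
  then have q': "(?q has_real_derivative ?p s) (at s)" and p': "(?p has_real_derivative - dg (?q s)) (at s)" for s
    by (simp_all add: ode_solution_newton_field_iff)
  have "((\<lambda>s. hamiltonian (ode_sol newton_field z s)) has_real_derivative 0) (at s)" for s
    unfolding hamiltonian_def
    by (rule derivative_eq_intros DERIV_chain2[OF g_has_real_derivative] q' p' refl | simp)+
  then show ?thesis
    using DERIV_isconst_all[of "\<lambda>s. hamiltonian (ode_sol newton_field z s)" t 0] by simp
qed

section \<open>Trajectories starting on Dset\<close>

definition Dset_param :: "real \<Rightarrow> real \<times> real" where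
  "Dset_param c = (if c \<le> 2 then (0, c) else (c - 2, 2))"

lemma fst_Dset_param [simp]: "fst (Dset_param c) = max 0 (c - 2)"
  and snd_Dset_param [simp]: "snd (Dset_param c) = min c 2"
  by (simp_all add: Dset_param_def)

lemma Dset_eq_image_Dset_param: "Dset = Dset_param ` {0<..}"
proof
  show "Dset \<subseteq> Dset_param ` {0<..}"
  proof
    fix z assume "z \<in> Dset"
    then consider "snd z = 2" "0 \<le> fst z" | "fst z = 0" "0 < snd z" "snd z \<le> 2"
      unfolding Dset_def by auto
    then show "z \<in> Dset_param ` {0<..}"
    proof cases
      case 1
      then show ?thesis by (intro image_eqI[of _ _ "fst z + 2"]) (auto simp: prod_eq_iff)
    next
      case 2
      then show ?thesis by (intro image_eqI[of _ _ "snd z"]) (auto simp: prod_eq_iff)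
    qed
  qed
  show "Dset_param ` {0<..} \<subseteq> Dset"
    by (auto simp: Dset_param_def Dset_def)
qed

lemma inj_on_Dset_param: "inj_on Dset_param {0<..}"
  by (auto simp: inj_on_def Dset_param_def split: if_splits)

lemma dist_Dset_param_le: "dist (Dset_param c) (Dset_param c') \<le> dist c c'"
proof -
  have "(max 0 (c - 2) - max 0 (c' - 2))\<^sup>2 + (min c 2 - min c' 2)\<^sup>2 \<le> (c - c')\<^sup>2"
  proof -
    have sq: "a\<^sup>2 + b\<^sup>2 \<le> (a + b)\<^sup>2" if "0 \<le> a" "0 \<le> b" for a b :: real
      using that by (simp add: power2_sum)
    consider "c \<le> 2" "c' \<le> 2" | "c \<le> 2" "2 < c'" | "2 < c" "c' \<le> 2" | "2 < c" "2 < c'"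
      by linarith
    then show ?thesis
    proof cases
      case 2
      then show ?thesis using sq[of "c' - 2" "2 - c"] by (simp add: power2_commute)
    next
      case 3
      then show ?thesis using sq[of "c - 2" "2 - c'"] by (simp add: power2_commute)
    qed simp_all
  qed
  then show ?thesis
    unfolding dist_prod_def dist_real_def
    by (metis fst_Dset_param snd_Dset_param power2_abs real_sqrt_abs real_sqrt_le_mono)
qed

lemma isCont_Dset_param: "isCont Dset_param c"
proof -
  have "1-lipschitz_on UNIV Dset_param"
    using dist_Dset_param_le by (intro lipschitz_onI) auto
  then have "continuous_on UNIV Dset_param"
    by (rule lipschitz_on_continuous_on)
  then show ?thesis
    by (simp add: continuous_on_eq_continuous_at)
qed

lemma Dset_param_eq_Pair_0: "0 < c \<Longrightarrow> Dset_param c = (0, p) \<Longrightarrow> c = p"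
  by (auto simp: Dset_param_def split: if_splits)

lemma hamiltonian_Dset_param_pos: "0 < c \<Longrightarrow> 0 < hamiltonian (Dset_param c)"
  unfolding hamiltonian_def using g_nonneg[of "max 0 (c - 2)"] by (simp add: add_pos_nonneg)

lemma two_le_hamiltonian_Dset_param: "2 \<le> c \<Longrightarrow> 2 \<le> hamiltonian (Dset_param c)"
  unfolding hamiltonian_def using g_nonneg[of "c - 2"] by simp

lemma hamiltonian_Dset_param_mono:
  assumes "0 < c1" "c1 \<le> c2"
  shows "hamiltonian (Dset_param c1) \<le> hamiltonian (Dset_param c2)"
proof -
  have "(min c1 2)\<^sup>2 \<le> (min c2 2)\<^sup>2" using assms by (intro power_mono) auto
  moreover have "g (max 0 (c1 - 2)) \<le> g (max 0 (c2 - 2))" using assms by (intro g_mono) auto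
  ultimately show ?thesis unfolding hamiltonian_def by simp
qed

definition traj_q :: "real \<Rightarrow> real \<Rightarrow> real" where
  "traj_q c s = fst (ode_sol newton_field (Dset_param c) s)"

definition traj_p :: "real \<Rightarrow> real \<Rightarrow> real" where
  "traj_p c s = snd (ode_sol newton_field (Dset_param c) s)"

lemma traj_q_0 [simp]: "traj_q c 0 = max 0 (c - 2)"
  and traj_p_0 [simp]: "traj_p c 0 = min c 2"
  by (simp_all add: traj_q_def traj_p_def)

lemma DERIV_traj_q: "(traj_q c has_real_derivative traj_p c s) (at s)"
  and DERIV_traj_p: "(traj_p c has_real_derivative - dg (traj_q c s)) (at s)"
  using ode_solution_ode_sol[OF lipschitz_newton_field, of "Dset_param c"]
  unfolding ode_solution_newton_field_iff traj_q_def[abs_def] traj_p_def[abs_def] by auto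

lemma isCont_traj_q: "isCont (traj_q c) s"
  using DERIV_traj_q by (rule DERIV_isCont)

lemma continuous_on_traj_q: "continuous_on S (traj_q c)"
  by (intro continuous_at_imp_continuous_on ballI isCont_traj_q)

lemma isCont_traj_p: "isCont (traj_p c) s"
  using DERIV_traj_p by (rule DERIV_isCont)

lemma traj_energy: "(traj_p c s)\<^sup>2 / 2 + g (traj_q c s) = hamiltonian (Dset_param c)"
  using hamiltonian_ode_sol[of "Dset_param c" s] by (simp add: hamiltonian_def traj_q_def traj_p_def)

lemma abs_traj_q_diff_le: "\<bar>traj_q c s - traj_q c' s\<bar> \<le> exp (49 * \<bar>s\<bar>) * \<bar>c - c'\<bar>"
proof -
  let ?z = "ode_sol newton_field (Dset_param c) s" and ?z' = "ode_sol newton_field (Dset_param c') s"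
  have "\<bar>traj_q c s - traj_q c' s\<bar> \<le> norm (?z - ?z')"
    using dist_fst_le[of ?z ?z'] by (simp add: traj_q_def dist_norm dist_real_def)
  also have "\<dots> \<le> exp (49 * \<bar>s\<bar>) * norm (Dset_param c - Dset_param c')"
    by (rule norm_ode_sol_diff_le[OF lipschitz_newton_field])
  also have "\<dots> \<le> exp (49 * \<bar>s\<bar>) * \<bar>c - c'\<bar>"
    using dist_Dset_param_le[of c c'] by (simp add: dist_norm dist_real_def)
  finally show ?thesis .
qed

lemma continuous_on_traj_q_param: "continuous_on S (\<lambda>c. traj_q c s)"
proof -
  have "(exp (49 * \<bar>s\<bar>))-lipschitz_on S (\<lambda>c. traj_q c s)"
    by (rule lipschitz_onI) (auto simp: dist_real_def abs_traj_q_diff_le)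
  then show ?thesis by (rule lipschitz_on_continuous_on)
qed

lemma traj_eq_imp_param_eq:
  assumes "0 < c1" "0 < c2" "traj_q c1 s = traj_q c2 s" "traj_p c1 s = traj_p c2 s"
  shows "c1 = c2"
proof -
  have "ode_sol newton_field (Dset_param c1) s = ode_sol newton_field (Dset_param c2) s"
    using assms by (simp add: traj_q_def traj_p_def prod_eq_iff)
  then have "Dset_param c1 = Dset_param c2"
    by (rule ode_sol_inj[OF lipschitz_newton_field])
  then show ?thesis
    using inj_on_Dset_param assms by (auto dest: inj_onD)
qed

lemma flow_q_Dset_param: "flow_q s (fst (Dset_param c)) (snd (Dset_param c)) = traj_q c s"
  by (simp add: flow_q_def flow_eq_ode_sol traj_q_def del: fst_Dset_param snd_Dset_param)

lemma traj_p_pos_of_two_le: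
  assumes "2 \<le> c" "0 \<le> s"
  shows "0 < traj_p c s"
proof (rule ccontr)
  assume "\<not> 0 < traj_p c s"
  then obtain r where "traj_p c r = 0"
    using IVT2'[of "traj_p c" s 0 0] assms
    by (auto intro: continuous_at_imp_continuous_on isCont_traj_p)
  then have "hamiltonian (Dset_param c) \<le> 1"
    using traj_energy[of c r] g_le_one[of "traj_q c r"] by simp
  then show False
    using two_le_hamiltonian_Dset_param[OF assms(1)] by simp
qed

lemma traj_q_gt_of_two_le:
  assumes "2 \<le> c" "0 < s"
  shows "c - 2 < traj_q c s"
proof -
  have "traj_q c 0 < traj_q c s"
  proof (rule DERIV_pos_imp_increasing[OF assms(2)])
    fix r :: real assume "0 \<le> r"
    then show "\<exists>y. (traj_q c has_real_derivative y) (at r) \<and> 0 < y"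
      using DERIV_traj_q traj_p_pos_of_two_le[OF assms(1)] by blast
  qed
  then show ?thesis by simp
qed

lemma traj_q_ge_of_le_two:
  assumes "0 < c" "c \<le> 2" "0 \<le> s"
  shows "c * s - 4 * s\<^sup>2 \<le> traj_q c s"
proof -
  have p: "c - 8 * r \<le> traj_p c r" if "0 \<le> r" for r
  proof -
    have "traj_p c 0 + 8 * 0 \<le> traj_p c r + 8 * r"
    proof (rule DERIV_nonneg_imp_nondecreasing[where f="\<lambda>r. traj_p c r + 8 * r", OF that])
      fix y
      have "((\<lambda>r. traj_p c r + 8 * r) has_real_derivative - dg (traj_q c y) + 8) (at y)"
        by (rule derivative_eq_intros DERIV_traj_p refl | simp)+
      then show "\<exists>d. ((\<lambda>r. traj_p c r + 8 * r) has_real_derivative d) (at y) \<and> 0 \<le> d"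
        using abs_dg_le[of "traj_q c y"] by force
    qed
    then show ?thesis using assms by simp
  qed
  have "traj_q c 0 - (c * 0 - 4 * 0\<^sup>2) \<le> traj_q c s - (c * s - 4 * s\<^sup>2)"
  proof (rule DERIV_nonneg_imp_nondecreasing[where f="\<lambda>r. traj_q c r - (c * r - 4 * r\<^sup>2)", OF assms(3)])
    fix y assume "0 \<le> y" "y \<le> s"
    have "((\<lambda>r. traj_q c r - (c * r - 4 * r\<^sup>2)) has_real_derivative traj_p c y - (c - 8 * y)) (at y)"
      by (rule derivative_eq_intros DERIV_traj_q refl | simp)+
    then show "\<exists>d. ((\<lambda>r. traj_q c r - (c * r - 4 * r\<^sup>2)) has_real_derivative d) (at y) \<and> 0 \<le> d"
      using p[OF \<open>0 \<le> y\<close>] by force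
  qed
  then show ?thesis using assms by simp
qed

lemma traj_q_pos_early:
  assumes "0 < c" "0 < s" "s < c / 4"
  shows "0 < traj_q c s"
proof (cases "c \<le> 2")
  case True
  have "0 < s * (c - 4 * s)" using assms by simp
  also have "\<dots> = c * s - 4 * s\<^sup>2" by (simp add: power2_eq_square algebra_simps)
  also have "\<dots> \<le> traj_q c s" using True assms by (intro traj_q_ge_of_le_two) auto
  finally show ?thesis .
next
  case False
  then show ?thesis using traj_q_gt_of_two_le[of c s] assms by simp
qed

lemma traj_q_small_param_lt:
  assumes "0 < x"
  shows "traj_q (min x 1 / 2) t < x"
proof (rule ccontr)
  define m where "m = min x 1"
  have m: "0 < m" "m \<le> x" "m \<le> 1" using assms by (auto simp: m_def)
  assume "\<not> traj_q (min x 1 / 2) t < x"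
  then have "m \<le> traj_q (m / 2) t" by (simp add: m_def)
  then have "m\<^sup>2 \<le> (traj_q (m / 2) t)\<^sup>2"
    using m by (intro power_mono) auto
  moreover have "m\<^sup>2 \<le> 1"
    using m by (intro power_le_one) auto
  ultimately have "m\<^sup>2 \<le> min ((traj_q (m / 2) t)\<^sup>2) 1"
    by (rule min.boundedI)
  also have "\<dots> \<le> g (traj_q (m / 2) t)"
    by (rule min_square_le_g)
  also have "\<dots> \<le> hamiltonian (Dset_param (m / 2))"
    using traj_energy[of "m / 2" t] zero_le_power2[of "traj_p (m / 2) t"] by linarith
  also have "\<dots> = m\<^sup>2 / 8"
    using m by (simp add: hamiltonian_def power2_eq_square)
  finally show False using m by simp
qed

section \<open>Comparison of trajectories\<close>

lemma first_zero_between: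
  fixes d :: "real \<Rightarrow> real"
  assumes cont: "continuous_on {a..b} d" and "a \<le> b" "0 < d a" "d b \<le> 0"
  obtains s where "a < s" "s \<le> b" "d s = 0" "\<forall>x\<in>{a..<s}. 0 < d x"
proof -
  define S where "S = {x \<in> {a..b}. d x \<le> 0}"
  have "closed S"
    unfolding S_def by (intro continuous_on_closed_Collect_le cont continuous_on_const) auto
  moreover have "b \<in> S" using assms by (simp add: S_def)
  moreover have "bdd_below S" by (auto simp: S_def intro: bdd_belowI[of _ a])
  ultimately have "Inf S \<in> S" by (intro closed_contains_Inf) auto
  define s where "s = Inf S"
  have s: "a \<le> s" "s \<le> b" "d s \<le> 0"
    using \<open>Inf S \<in> S\<close> by (simp_all add: S_def s_def)
  have "s \<noteq> a" using assms(3) s(3) by auto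
  with s(1) have "a < s" by simp
  have pos: "0 < d x" if "a \<le> x" "x < s" for x
  proof -
    have "x \<notin> S"
      using that \<open>bdd_below S\<close> cInf_lower[of x S] by (auto simp: s_def)
    then show ?thesis using that s(2) by (simp add: S_def)
  qed
  obtain r where r: "a \<le> r" "r \<le> s" "d r = 0"
    using IVT2'[of d s 0 a] s assms(3) \<open>a < s\<close> continuous_on_subset[OF cont, of "{a..s}"] by auto
  have "r = s"
  proof (rule ccontr)
    assume "r \<noteq> s"
    then have "0 < d r" using pos[of r] r by simp
    then show False using r by simp
  qed
  then show ?thesis
    using that[of s] \<open>a < s\<close> s r pos by simp
qed

lemma first_zero_after_0:
  fixes d :: "real \<Rightarrow> real"
  assumes cont: "continuous_on {0..t} d" and "0 < t" "d t \<le> 0"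
    and early: "\<forall>\<^sub>F x in at_right 0. 0 < d x"
  obtains s where "0 < s" "s \<le> t" "d s = 0" "\<forall>x\<in>{0<..<s}. 0 < d x"
proof -
  obtain e where e: "0 < e" "\<And>x. 0 < x \<Longrightarrow> x < e \<Longrightarrow> 0 < d x"
    using early unfolding eventually_at_right_field by auto
  define a where "a = min e t / 2"
  have a: "0 < a" "a < e" "a \<le> t" "0 < d a"
    using e \<open>0 < t\<close> by (auto simp: a_def)
  obtain s where s: "a < s" "s \<le> t" "d s = 0" "\<forall>x\<in>{a..<s}. 0 < d x"
    using first_zero_between[of a t d] continuous_on_subset[OF cont, of "{a..t}"] a assms(3) by auto
  show ?thesis
  proof (rule that)
    show "0 < s" "s \<le> t" "d s = 0" using a s by auto
    show "\<forall>x\<in>{0<..<s}. 0 < d x"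
      using s(4) e(2) a(2) by (metis atLeastLessThan_iff greaterThanLessThan_iff le_less_linear less_trans)
  qed
qed

lemma DERIV_nonpos_at_first_zero:
  assumes "(d has_real_derivative D) (at s)" "0 < s" "d s = 0" "\<forall>x\<in>{0<..<s}. 0 < d x"
  shows "D \<le> 0"
proof (rule ccontr)
  assume "\<not> D \<le> 0"
  then obtain e where e: "0 < e" "\<And>h. 0 < h \<Longrightarrow> h < e \<Longrightarrow> d (s - h) < d s"
    using DERIV_pos_inc_left[OF assms(1)] by force
  define h where "h = min e s / 2"
  have "0 < h" "h < e" "s - h \<in> {0<..<s}" using e assms(2) by (auto simp: h_def)
  then show False using e(2)[of h] assms(3,4) by fastforce
qed

lemma traj_p_le_at_meeting_of_two_le:
  assumes "0 < c1" "c1 \<le> c2" "2 \<le> c2" "0 \<le> s" and meet: "traj_q c1 s = traj_q c2 s"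
  shows "traj_p c1 s \<le> traj_p c2 s"
proof -
  have "(traj_p c1 s)\<^sup>2 \<le> (traj_p c2 s)\<^sup>2"
    using traj_energy[of c1 s] traj_energy[of c2 s] meet hamiltonian_Dset_param_mono[OF assms(1,2)]
    by simp
  then have "\<bar>traj_p c1 s\<bar> \<le> \<bar>traj_p c2 s\<bar>"
    by (simp add: abs_le_square_iff)
  then show ?thesis
    using traj_p_pos_of_two_le[OF assms(3,4)] by linarith
qed

lemma traj_p_le_at_meeting_of_le_two:
  assumes "c1 \<le> 2" "c2 \<le> 2" "0 \<le> s"
    and between: "\<And>r. 0 \<le> r \<Longrightarrow> r \<le> s \<Longrightarrow> 0 \<le> traj_q c1 r \<and> traj_q c1 r \<le> traj_q c2 r"
    and meet: "traj_q c1 s = traj_q c2 s" "0 < traj_q c1 s"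
  shows "traj_p c1 s \<le> traj_p c2 s"
proof -
  define W where "W r = traj_q c1 r * traj_p c2 r - traj_q c2 r * traj_p c1 r" for r
  have "W 0 \<le> W s"
  proof (rule DERIV_nonneg_imp_nondecreasing[where f=W, OF assms(3)])
    fix r assume r: "0 \<le> r" "r \<le> s"
    have "(W has_real_derivative traj_q c2 r * dg (traj_q c1 r) - traj_q c1 r * dg (traj_q c2 r)) (at r)"
      unfolding W_def
      by (rule derivative_eq_intros DERIV_traj_q DERIV_traj_p refl)+ (simp add: algebra_simps)
    moreover have "traj_q c1 r * dg (traj_q c2 r) \<le> traj_q c2 r * dg (traj_q c1 r)"
      using between[OF r] by (intro mult_dg_le) auto
    ultimately show "\<exists>y. (W has_real_derivative y) (at r) \<and> 0 \<le> y"
      by (intro exI conjI) auto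
  qed
  moreover have "W 0 = 0" using assms(1,2) by (simp add: W_def)
  moreover have "W s = traj_q c1 s * (traj_p c2 s - traj_p c1 s)"
    using meet by (simp add: W_def algebra_simps)
  ultimately show ?thesis
    using meet(2) by (simp add: zero_le_mult_iff)
qed

lemma eventually_traj_q_less_at_right_0:
  assumes "0 < c1" "c1 < c2"
  shows "\<forall>\<^sub>F s in at_right 0. traj_q c1 s < traj_q c2 s"
proof (cases "c2 \<le> 2")
  case True
  let ?d = "\<lambda>s. traj_q c2 s - traj_q c1 s"
  have "(?d has_real_derivative traj_p c2 0 - traj_p c1 0) (at 0)"
    by (intro derivative_intros DERIV_traj_q)
  moreover have "0 < traj_p c2 0 - traj_p c1 0" using True assms by simp
  ultimately obtain e where "0 < e" "\<forall>h>0. h < e \<longrightarrow> ?d 0 < ?d (0 + h)"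
    using DERIV_pos_inc_right by blast
  moreover have "?d 0 = 0" using True assms by simp
  ultimately show ?thesis
    unfolding eventually_at_right_field by (intro exI[of _ e]) auto
next
  case False
  have "isCont (\<lambda>s. traj_q c2 s - traj_q c1 s) 0"
    by (intro continuous_intros isCont_traj_q)
  then have "((\<lambda>s. traj_q c2 s - traj_q c1 s) \<longlongrightarrow> traj_q c2 0 - traj_q c1 0) (at_right 0)"
    unfolding isCont_def by (rule tendsto_mono[OF at_le, rotated]) simp
  moreover have "0 < traj_q c2 0 - traj_q c1 0" using False assms by simp
  ultimately have "\<forall>\<^sub>F s in at_right 0. 0 < traj_q c2 s - traj_q c1 s"
    by (rule order_tendstoD)
  then show ?thesis by eventually_elim simp
qed

lemma traj_p_le_at_first_meeting:
  assumes "0 < c1" "c1 < c2" "0 < s" and meet: "traj_q c1 s = traj_q c2 s"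
    and below: "\<forall>r\<in>{0<..<s}. traj_q c1 r < traj_q c2 r" and pos: "\<forall>r\<in>{0<..s}. 0 < traj_q c1 r"
  shows "traj_p c1 s \<le> traj_p c2 s"
proof (cases "c2 \<le> 2")
  case True
  have "0 \<le> traj_q c1 r \<and> traj_q c1 r \<le> traj_q c2 r" if r: "0 \<le> r" "r \<le> s" for r
  proof -
    consider "r = 0" | "r = s" | "0 < r" "r < s" using r by linarith
    then show ?thesis
    proof cases
      case 1
      then show ?thesis using True assms by simp
    next
      case 2
      then show ?thesis using pos[rule_format, of s] meet assms(3) by simp
    next
      case 3
      then show ?thesis using pos below by (simp add: less_imp_le)
    qed
  qed
  then show ?thesis
    using True assms pos[rule_format, of s] by (intro traj_p_le_at_meeting_of_le_two) auto
next
  case False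
  then show ?thesis
    using assms by (intro traj_p_le_at_meeting_of_two_le) auto
qed

lemma traj_q_strict_mono:
  assumes "0 < t" "0 < c1" "c1 < c2" and pos: "\<And>s. 0 < s \<Longrightarrow> s \<le> t \<Longrightarrow> 0 < traj_q c1 s"
  shows "traj_q c1 t < traj_q c2 t"
proof (rule ccontr)
  assume "\<not> traj_q c1 t < traj_q c2 t"
  define d where "d s = traj_q c2 s - traj_q c1 s" for s
  have "continuous_on {0..t} d"
    unfolding d_def by (intro continuous_intros continuous_on_traj_q)
  moreover have "\<forall>\<^sub>F s in at_right 0. 0 < d s"
    using eventually_traj_q_less_at_right_0[OF assms(2,3)] by eventually_elim (simp add: d_def)
  moreover have "d t \<le> 0" using \<open>\<not> traj_q c1 t < traj_q c2 t\<close> by (simp add: d_def)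
  ultimately obtain s where s: "0 < s" "s \<le> t" "d s = 0" and gap: "\<forall>r\<in>{0<..<s}. 0 < d r"
    using first_zero_after_0[of t d] assms(1) by blast
  have meet: "traj_q c1 s = traj_q c2 s" using s(3) by (simp add: d_def)
  have "(d has_real_derivative traj_p c2 s - traj_p c1 s) (at s)"
    unfolding d_def by (intro derivative_intros DERIV_traj_q)
  then have "traj_p c2 s - traj_p c1 s \<le> 0"
    using s(1,3) gap by (rule DERIV_nonpos_at_first_zero)
  moreover have "traj_p c1 s \<le> traj_p c2 s"
    using assms(2,3) s(1) meet gap pos s(2)
    by (intro traj_p_le_at_first_meeting) (auto simp: d_def)
  ultimately have "c1 = c2"
    using meet assms by (intro traj_eq_imp_param_eq[of c1 c2 s]) auto
  then show False using assms by simp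
qed

section \<open>Admissible parameters and the map Delta\<close>

definition admissible :: "real \<Rightarrow> real \<Rightarrow> bool" where
  "admissible t c \<longleftrightarrow> (\<forall>s\<in>{0<..<t}. 0 < traj_q c s)"

lemma admissible_pos_upto:
  assumes "admissible t c" "0 < traj_q c t" "0 < s" "s \<le> t"
  shows "0 < traj_q c s"
  using assms unfolding admissible_def by (cases "s = t") auto

lemma admissible_mono:
  assumes "admissible t c1" "0 < c1" "c1 \<le> c2"
  shows "admissible t c2"
  unfolding admissible_def
proof
  fix s assume s: "s \<in> {0<..<t}"
  then have "0 < traj_q c1 s" using assms(1) by (simp add: admissible_def)
  moreover have "traj_q c1 s \<le> traj_q c2 s"
  proof (cases "c1 = c2")
    case False
    have "traj_q c1 s < traj_q c2 s"
      using assms False s by (intro traj_q_strict_mono) (auto simp: admissible_def)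
    then show ?thesis by simp
  qed simp
  ultimately show "0 < traj_q c2 s" by simp
qed

lemma admissible_of_two_le: "2 \<le> c \<Longrightarrow> admissible t c"
  unfolding admissible_def using traj_q_gt_of_two_le[of c] by fastforce

lemma admissible_of_nonneg:
  assumes "0 < c" and nonneg: "\<forall>s\<in>{0<..<t}. 0 \<le> traj_q c s"
  shows "admissible t c"
  unfolding admissible_def
proof
  fix s assume s: "s \<in> {0<..<t}"
  show "0 < traj_q c s"
  proof (rule ccontr)
    assume "\<not> 0 < traj_q c s"
    then have zero: "traj_q c s = 0" using nonneg s by force
    have "traj_p c s = 0"
    proof (rule DERIV_local_min[OF DERIV_traj_q])
      show "0 < min s (t - s)" using s by simp
      show "\<forall>y. \<bar>s - y\<bar> < min s (t - s) \<longrightarrow> traj_q c s \<le> traj_q c y"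
      proof (intro allI impI)
        fix y assume "\<bar>s - y\<bar> < min s (t - s)"
        then have "y \<in> {0<..<t}" by (auto simp: abs_less_iff)
        then show "traj_q c s \<le> traj_q c y" using nonneg zero by simp
      qed
    qed
    then have "hamiltonian (Dset_param c) = 0"
      using traj_energy[of c s] zero by simp
    then show False using hamiltonian_Dset_param_pos[OF assms(1)] by simp
  qed
qed

lemma admissible_closure:
  assumes "0 < c" "c \<in> closure {c. admissible t c}"
  shows "admissible t c"
proof -
  have "{c. \<forall>s\<in>{0<..<t}. 0 \<le> traj_q c s} = (\<Inter>s\<in>{0<..<t}. {c. 0 \<le> traj_q c s})"
    by auto
  also have "closed \<dots>"
    by (intro closed_INT ballI closed_Collect_le continuous_on_const continuous_on_traj_q_param)
  finally have "closed {c. \<forall>s\<in>{0<..<t}. 0 \<le> traj_q c s}" .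
  moreover have "{c. admissible t c} \<subseteq> {c. \<forall>s\<in>{0<..<t}. 0 \<le> traj_q c s}"
    by (auto simp: admissible_def less_imp_le)
  ultimately have "\<forall>s\<in>{0<..<t}. 0 \<le> traj_q c s"
    using closure_minimal assms(2) by blast
  with assms(1) show ?thesis by (rule admissible_of_nonneg)
qed

lemma traj_q_pos_near:
  assumes "0 < traj_q c t0"
  obtains e where "0 < e" "\<And>s. \<bar>s - t0\<bar> < e \<Longrightarrow> 0 < traj_q c s"
proof -
  obtain e where e: "0 < e" "\<forall>s. s \<noteq> t0 \<and> \<bar>t0 - s\<bar> < e \<longrightarrow> 0 < traj_q c s"
    using LIM_fun_gt_zero[OF isCont_traj_q[unfolded isCont_def] assms] by blast
  show ?thesis
  proof (rule that[OF e(1)])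
    fix s assume "\<bar>s - t0\<bar> < e"
    then show "0 < traj_q c s"
      using e(2) assms by (cases "s = t0") (auto simp: abs_minus_commute)
  qed
qed

lemma traj_q_pos_uniform:
  assumes "0 < t0" "0 < c0" and pos: "\<And>s. 0 < s \<Longrightarrow> s \<le> t0 \<Longrightarrow> 0 < traj_q c0 s"
  obtains T \<delta> where "t0 < T" "0 < \<delta>" "\<And>c s. \<bar>c - c0\<bar> < \<delta> \<Longrightarrow> 0 < s \<Longrightarrow> s \<le> T \<Longrightarrow> 0 < traj_q c s"
proof -
  obtain e where e: "0 < e" "\<And>s. \<bar>s - t0\<bar> < e \<Longrightarrow> 0 < traj_q c0 s"
    using traj_q_pos_near pos[OF assms(1) order_refl] by blast
  \<comment> \<open>Before s1 positivity is uniform in c near c0; on [s1, T] it follows from the positive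
    minimum of traj_q c0 and the Lipschitz dependence on c.\<close>
  define T where "T = t0 + e / 2"
  define s1 where "s1 = min t0 (c0 / 8)"
  have s1: "0 < s1" "s1 \<le> T" using assms e by (auto simp: s1_def T_def)
  have pos_K: "0 < traj_q c0 s" if "s \<in> {s1..T}" for s
    using that pos[of s] e(2)[of s] s1 by (cases "s \<le> t0") (auto simp: T_def)
  obtain s_min where s_min: "s_min \<in> {s1..T}" "\<And>s. s \<in> {s1..T} \<Longrightarrow> traj_q c0 s_min \<le> traj_q c0 s"
    using continuous_attains_inf[of "{s1..T}" "traj_q c0"] s1 continuous_on_traj_q by auto
  define m where "m = traj_q c0 s_min"
  have "0 < m" unfolding m_def using pos_K s_min(1) .
  define \<delta> where "\<delta> = min (c0 / 2) (m / exp (49 * T))"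
  show thesis
  proof (rule that)
    show "t0 < T" using e by (simp add: T_def)
    show "0 < \<delta>" using assms \<open>0 < m\<close> by (simp add: \<delta>_def)
    fix c s assume c: "\<bar>c - c0\<bar> < \<delta>" and s: "0 < s" "s \<le> T"
    show "0 < traj_q c s"
    proof (cases "s < s1")
      case True
      have "\<bar>c - c0\<bar> < c0 / 2" using c by (simp add: \<delta>_def)
      then have "c0 / 2 < c" by arith
      then show ?thesis using True s assms(2) by (intro traj_q_pos_early) (auto simp: s1_def)
    next
      case False
      then have sK: "s \<in> {s1..T}" using s by simp
      have "\<bar>traj_q c s - traj_q c0 s\<bar> \<le> exp (49 * \<bar>s\<bar>) * \<bar>c - c0\<bar>"
        by (rule abs_traj_q_diff_le)
      also have "\<dots> \<le> exp (49 * T) * \<bar>c - c0\<bar>"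
        using sK s1 by (intro mult_right_mono) auto
      also have "\<dots> < exp (49 * T) * (m / exp (49 * T))"
        using c by (intro mult_strict_left_mono) (auto simp: \<delta>_def)
      also have "\<dots> = m" by simp
      also have "m \<le> traj_q c0 s" unfolding m_def using s_min(2)[OF sK] .
      finally show ?thesis by linarith
    qed
  qed
qed

lemma admissible_nhds:
  assumes "0 < t0" "0 < c0" and pos: "\<And>s. 0 < s \<Longrightarrow> s \<le> t0 \<Longrightarrow> 0 < traj_q c0 s"
  obtains \<delta> where "0 < \<delta>" "\<And>t c. \<bar>t - t0\<bar> < \<delta> \<Longrightarrow> \<bar>c - c0\<bar> < \<delta> \<Longrightarrow> admissible t c"
proof -
  obtain T \<delta> where T: "t0 < T" "0 < \<delta>"
    and pos_T: "\<And>c s. \<bar>c - c0\<bar> < \<delta> \<Longrightarrow> 0 < s \<Longrightarrow> s \<le> T \<Longrightarrow> 0 < traj_q c s"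
    using traj_q_pos_uniform[OF assms] by blast
  show thesis
  proof (rule that[of "min \<delta> (T - t0)"])
    show "0 < min \<delta> (T - t0)" using T by simp
    fix t c assume "\<bar>t - t0\<bar> < min \<delta> (T - t0)" "\<bar>c - c0\<bar> < min \<delta> (T - t0)"
    then have "t < T" "\<bar>c - c0\<bar> < \<delta>" by arith+
    then show "admissible t c" using pos_T by (auto simp: admissible_def)
  qed
qed

lemma admissible_Inf:
  assumes "0 < c'" "\<not> admissible t c'"
  defines "c0 \<equiv> Inf {c. 0 < c \<and> admissible t c}"
  shows "c' \<le> c0" "admissible t c0"
proof -
  define A where "A = {c. 0 < c \<and> admissible t c}"
  have "2 \<in> A" by (simp add: A_def admissible_of_two_le)
  have "bdd_below A" by (auto simp: A_def intro: bdd_belowI[of _ 0])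
  show "c' \<le> c0"
    unfolding c0_def A_def[symmetric]
  proof (rule cInf_greatest)
    show "A \<noteq> {}" using \<open>2 \<in> A\<close> by blast
    fix c assume "c \<in> A"
    then have c: "0 < c" "admissible t c" by (simp_all add: A_def)
    show "c' \<le> c"
    proof (rule ccontr)
      assume "\<not> c' \<le> c"
      then have "admissible t c'" using admissible_mono[OF c(2,1)] by simp
      then show False using assms(2) by simp
    qed
  qed
  have "c0 \<in> closure A"
    unfolding c0_def A_def[symmetric] using \<open>2 \<in> A\<close> \<open>bdd_below A\<close> by (intro closure_contains_Inf) auto
  moreover have "A \<subseteq> {c. admissible t c}" by (auto simp: A_def)
  ultimately have "c0 \<in> closure {c. admissible t c}"
    by (rule subsetD[OF closure_mono, rotated])
  then show "admissible t c0"
    using \<open>c' \<le> c0\<close> assms(1) by (intro admissible_closure) auto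
qed

lemma exists_admissible_below:
  assumes "0 < t" "0 < x"
  obtains c where "0 < c" "admissible t c" "traj_q c t < x"
proof (cases "\<forall>c>0. admissible t c")
  case True
  show ?thesis
  proof (rule that)
    show "0 < min x 1 / 2" "traj_q (min x 1 / 2) t < x"
      using assms(2) traj_q_small_param_lt[OF assms(2)] by simp_all
    then show "admissible t (min x 1 / 2)" using True by blast
  qed
next
  case False
  then obtain c' where c': "0 < c'" "\<not> admissible t c'" by blast
  define c0 where "c0 = Inf {c. 0 < c \<and> admissible t c}"
  have "0 < c0" and adm: "admissible t c0"
    using admissible_Inf[OF c'] c'(1) by (auto simp: c0_def)
  \<comment> \<open>Otherwise all parameters slightly below c0 would be admissible as well.\<close>
  have "traj_q c0 t \<le> 0"
  proof (rule ccontr)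
    assume "\<not> traj_q c0 t \<le> 0"
    then have "0 < traj_q c0 s" if "0 < s" "s \<le> t" for s
      using admissible_pos_upto[OF adm _ that] by simp
    then obtain \<delta> where \<delta>: "0 < \<delta>" "\<And>t' c. \<bar>t' - t\<bar> < \<delta> \<Longrightarrow> \<bar>c - c0\<bar> < \<delta> \<Longrightarrow> admissible t' c"
      using admissible_nhds[OF assms(1) \<open>0 < c0\<close>] by blast
    define c where "c = max (c0 / 2) (c0 - \<delta> / 2)"
    have "0 < c" "c < c0" "\<bar>c - c0\<bar> < \<delta>"
      using \<delta>(1) \<open>0 < c0\<close> by (auto simp: c_def)
    then have "admissible t c" using \<delta> by simp
    then have "c0 \<le> c"
      unfolding c0_def using \<open>0 < c\<close> by (intro cInf_lower bdd_belowI[of _ 0]) auto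
    then show False using \<open>c < c0\<close> by simp
  qed
  then show ?thesis
    using that[of c0] \<open>0 < c0\<close> adm assms(2) by simp
qed

lemma exists_admissible_hitting:
  assumes "0 < t" "0 < x"
  obtains c where "0 < c" "admissible t c" "traj_q c t = x"
proof -
  obtain c0 where c0: "0 < c0" "admissible t c0" "traj_q c0 t < x"
    using exists_admissible_below[OF assms] .
  define C where "C = max c0 (x + 2)"
  have C: "c0 \<le> C" "x + 2 \<le> C" by (simp_all add: C_def)
  then have "x < traj_q C t"
    using traj_q_gt_of_two_le[of C t] assms by simp
  then obtain c where "c0 \<le> c" "c \<le> C" "traj_q c t = x"
    using IVT'[of "\<lambda>c. traj_q c t" c0 x C] c0(3) C(1) continuous_on_traj_q_param by auto
  then show ?thesis
    using that[of c] admissible_mono[OF c0(2,1)] c0(1) by simp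
qed

definition Delta_param :: "real \<Rightarrow> real \<Rightarrow> real" where
  "Delta_param t x = (THE c. 0 < c \<and> admissible t c \<and> traj_q c t = x)"

lemma Delta_param_eqI:
  assumes "0 < t" "0 < x" "0 < c" "admissible t c" "traj_q c t = x"
  shows "Delta_param t x = c"
  unfolding Delta_param_def
proof (rule the_equality)
  show "0 < c \<and> admissible t c \<and> traj_q c t = x" using assms by simp
  have less: False if "0 < c1" "c1 < c2" "admissible t c1" "traj_q c1 t = x" "traj_q c2 t = x" for c1 c2
    using traj_q_strict_mono[of t c1 c2] admissible_pos_upto[of t c1] that assms(1,2) by simp
  fix c' assume "0 < c' \<and> admissible t c' \<and> traj_q c' t = x"
  then show "c' = c"
    using less[of c' c] less[of c c'] assms by (cases c' c rule: linorder_cases) auto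
qed

lemma Delta_param:
  assumes "0 < t" "0 < x"
  shows "0 < Delta_param t x" "admissible t (Delta_param t x)" "traj_q (Delta_param t x) t = x"
proof -
  obtain c where "0 < c" "admissible t c" "traj_q c t = x"
    using exists_admissible_hitting[OF assms] .
  moreover have "Delta_param t x = c"
    using assms calculation by (intro Delta_param_eqI)
  ultimately show "0 < Delta_param t x" "admissible t (Delta_param t x)" "traj_q (Delta_param t x) t = x"
    by simp_all
qed

lemma Delta_param_less_iff:
  assumes "0 < t" "0 < x" "0 < a"
  shows "Delta_param t x < a \<longleftrightarrow> admissible t a \<and> x < traj_q a t"
proof
  let ?c = "Delta_param t x"
  note c = Delta_param[OF assms(1,2)]
  assume "?c < a"
  have "traj_q ?c t < traj_q a t"
    by (rule traj_q_strict_mono) (use c assms \<open>?c < a\<close> admissible_pos_upto[OF c(2)] in auto)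
  then show "admissible t a \<and> x < traj_q a t"
    using c admissible_mono[of t ?c a] \<open>?c < a\<close> by simp
next
  let ?c = "Delta_param t x"
  note c = Delta_param[OF assms(1,2)]
  assume a: "admissible t a \<and> x < traj_q a t"
  show "?c < a"
  proof (rule ccontr)
    assume "\<not> ?c < a"
    moreover have "traj_q a t < traj_q ?c t" if "a < ?c"
      by (rule traj_q_strict_mono) (use that a assms admissible_pos_upto[of t a] in auto)
    ultimately show False using a c by (cases "a = ?c") auto
  qed
qed

lemma less_Delta_param_iff:
  assumes "0 < t" "0 < x" "0 < a"
  shows "a < Delta_param t x \<longleftrightarrow> \<not> admissible t a \<or> traj_q a t < x"
proof -
  have "a = Delta_param t x \<longleftrightarrow> admissible t a \<and> traj_q a t = x"
    using Delta_param[OF assms(1,2)] Delta_param_eqI[OF assms] by auto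
  then show ?thesis
    using Delta_param_less_iff[OF assms] by auto
qed

definition Delta :: "real \<times> real \<Rightarrow> real \<times> real" where
  "Delta z = Dset_param (Delta_param (fst z) (snd z))"

lemma good_Delta_Delta: "good_Delta Delta"
  unfolding good_Delta_def
proof (intro allI impI conjI)
  fix t x :: real assume "0 < t \<and> 0 < x"
  then have c: "0 < Delta_param t x" "admissible t (Delta_param t x)" "traj_q (Delta_param t x) t = x"
    using Delta_param by auto
  then show "Delta (t, x) \<in> Dset"
    by (simp add: Delta_def Dset_eq_image_Dset_param)
  show "flow_q t (fst (Delta (t, x))) (snd (Delta (t, x))) = x"
    using c unfolding Delta_def fst_conv snd_conv flow_q_Dset_param by simp
  show "\<forall>s\<in>{0<..<t}. 0 < flow_q s (fst (Delta (t, x))) (snd (Delta (t, x)))"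
    using c unfolding Delta_def fst_conv snd_conv flow_q_Dset_param admissible_def by simp
qed

lemma good_Delta_imp_eq_Delta:
  assumes "good_Delta D" "0 < t" "0 < x"
  shows "D (t, x) = Delta (t, x)"
proof -
  have D: "D (t, x) \<in> Dset" "flow_q t (fst (D (t, x))) (snd (D (t, x))) = x"
    "\<forall>s\<in>{0<..<t}. 0 < flow_q s (fst (D (t, x))) (snd (D (t, x)))"
    using assms unfolding good_Delta_def by auto
  then obtain c where c: "0 < c" "D (t, x) = Dset_param c"
    unfolding Dset_eq_image_Dset_param by auto
  have "traj_q c t = x" "admissible t c"
    using D(2,3) unfolding c(2) flow_q_Dset_param admissible_def by simp_all
  then have "Delta_param t x = c"
    using assms c by (intro Delta_param_eqI)
  then show ?thesis by (simp add: Delta_def c(2))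
qed

lemma eventually_Delta_param_less:
  assumes t: "(t \<longlongrightarrow> t0) F" and x: "(x \<longlongrightarrow> x0) F" and "0 < t0" "0 < x0"
    and less: "Delta_param t0 x0 < a"
  shows "\<forall>\<^sub>F i in F. Delta_param (t i) (x i) < a"
proof -
  have "0 < a" using Delta_param(1)[OF assms(3,4)] less by simp
  then have a: "admissible t0 a" "x0 < traj_q a t0"
    using Delta_param_less_iff[OF assms(3,4)] less by auto
  have "0 < traj_q a s" if "0 < s" "s \<le> t0" for s
    using admissible_pos_upto[OF a(1) _ that] a(2) assms(4) by simp
  then obtain \<delta> where \<delta>: "0 < \<delta>" "\<And>t' c. \<bar>t' - t0\<bar> < \<delta> \<Longrightarrow> \<bar>c - a\<bar> < \<delta> \<Longrightarrow> admissible t' c"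
    using admissible_nhds[OF assms(3) \<open>0 < a\<close>] by blast
  have "\<forall>\<^sub>F i in F. \<bar>t i - t0\<bar> < \<delta>"
    using tendstoD[OF t \<delta>(1)] by (simp add: dist_real_def)
  moreover have "((\<lambda>i. traj_q a (t i) - x i) \<longlongrightarrow> traj_q a t0 - x0) F"
    by (intro tendsto_diff isCont_tendsto_compose[OF isCont_traj_q t] x)
  then have "\<forall>\<^sub>F i in F. 0 < traj_q a (t i) - x i"
    by (rule order_tendstoD(1)) (use a(2) in simp)
  moreover have "\<forall>\<^sub>F i in F. 0 < t i" "\<forall>\<^sub>F i in F. 0 < x i"
    using order_tendstoD(1)[OF t assms(3)] order_tendstoD(1)[OF x assms(4)] .
  ultimately show ?thesis
    by eventually_elim (simp add: Delta_param_less_iff \<open>0 < a\<close> \<delta>(1,2))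
qed

lemma eventually_less_Delta_param:
  assumes t: "(t \<longlongrightarrow> t0) F" and x: "(x \<longlongrightarrow> x0) F" and "0 < t0" "0 < x0"
    and less: "a < Delta_param t0 x0"
  shows "\<forall>\<^sub>F i in F. a < Delta_param (t i) (x i)"
proof -
  have pos: "\<forall>\<^sub>F i in F. 0 < t i \<and> 0 < x i"
    using order_tendstoD(1)[OF t assms(3)] order_tendstoD(1)[OF x assms(4)] by eventually_elim simp
  show ?thesis
  proof (cases "0 < a")
    case False
    show ?thesis
      using pos
    proof eventually_elim
      case (elim i)
      then show ?case using Delta_param(1)[of "t i" "x i"] False by simp
    qed
  next
    case True
    then have "\<not> admissible t0 a \<or> traj_q a t0 < x0"
      using less less_Delta_param_iff[OF assms(3,4) True] by simp
    then have "\<forall>\<^sub>F i in F. \<not> admissible (t i) a \<or> traj_q a (t i) < x i"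
    proof
      assume "\<not> admissible t0 a"
      then obtain s0 where s0: "0 < s0" "s0 < t0" "\<not> 0 < traj_q a s0"
        by (auto simp: admissible_def)
      have "\<forall>\<^sub>F i in F. s0 < t i" using order_tendstoD(1)[OF t s0(2)] .
      then show ?thesis by eventually_elim (use s0 in \<open>auto simp: admissible_def\<close>)
    next
      assume "traj_q a t0 < x0"
      have "((\<lambda>i. traj_q a (t i) - x i) \<longlongrightarrow> traj_q a t0 - x0) F"
        by (intro tendsto_diff isCont_tendsto_compose[OF isCont_traj_q t] x)
      then have "\<forall>\<^sub>F i in F. traj_q a (t i) - x i < 0"
        by (rule order_tendstoD(2)) (use \<open>traj_q a t0 < x0\<close> in simp)
      then show ?thesis by eventually_elim simp
    qed
    then show ?thesis
      using pos by eventually_elim (simp add: less_Delta_param_iff True)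
  qed
qed

lemma isCont_Delta_param:
  assumes "0 < t0" "0 < x0"
  shows "isCont (\<lambda>z. Delta_param (fst z) (snd z)) (t0, x0)"
proof -
  have t: "(fst \<longlongrightarrow> t0) (at (t0, x0))" and x: "(snd \<longlongrightarrow> x0) (at (t0, x0))"
    using tendsto_fst[OF tendsto_ident_at[of "(t0, x0)" UNIV]]
      tendsto_snd[OF tendsto_ident_at[of "(t0, x0)" UNIV]] by simp_all
  show ?thesis
    unfolding isCont_def
    by (rule order_tendstoI)
      (use eventually_Delta_param_less[OF t x assms] eventually_less_Delta_param[OF t x assms] in simp_all)
qed

lemma continuous_on_Delta: "continuous_on ({0<..} \<times> {0<..}) Delta"
proof (intro continuous_at_imp_continuous_on ballI)
  fix z :: "real \<times> real" assume "z \<in> {0<..} \<times> {0<..}"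
  then have "isCont (\<lambda>z. Delta_param (fst z) (snd z)) z"
    using isCont_Delta_param[of "fst z" "snd z"] by (cases z) auto
  then show "isCont Delta z"
    unfolding Delta_def[abs_def] by (rule isCont_o2[OF _ isCont_Dset_param])
qed

lemma Delta_eq_Pair_0_mono:
  assumes "0 < t" "0 < x" "x < x'" "Delta (t, x) = (0, p)" "Delta (t, x') = (0, p')"
  shows "p < p'"
proof -
  note c = Delta_param[OF assms(1,2)] and c' = Delta_param[OF assms(1), of x']
  have "Delta_param t x = p" "Delta_param t x' = p'"
    using assms c c' by (auto simp: Delta_def intro: Dset_param_eq_Pair_0)
  moreover have "Delta_param t x < Delta_param t x'"
    using less_Delta_param_iff[OF assms(1) _ c(1), of x'] c assms by simp
  ultimately show ?thesis by simp
qed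

lemma tendsto_Delta_param_at_right_0:
  assumes "0 < x"
  shows "((\<lambda>t. Delta_param t x) \<longlongrightarrow> x + 2) (at_right 0)"
proof -
  have pos: "\<forall>\<^sub>F t in at_right 0. 0 < (t::real)"
    by (rule eventually_at_right_less)
  have traj: "(traj_q a \<longlongrightarrow> max 0 (a - 2)) (at_right 0)" for a
  proof -
    have "(traj_q a \<longlongrightarrow> traj_q a 0) (at_right 0)"
      using isCont_traj_q[where c=a and s=0] unfolding isCont_def
      by (rule tendsto_mono[OF at_le, rotated]) simp
    then show ?thesis by simp
  qed
  show ?thesis
  proof (rule order_tendstoI)
    fix a assume "x + 2 < a"
    then have "\<forall>\<^sub>F t in at_right 0. x < traj_q a t"
      using order_tendstoD(1)[OF traj] by simp
    then show "\<forall>\<^sub>F t in at_right 0. Delta_param t x < a"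
      using pos by eventually_elim
        (use assms \<open>x + 2 < a\<close> in \<open>simp add: Delta_param_less_iff admissible_of_two_le\<close>)
  next
    fix a assume "a < x + 2"
    show "\<forall>\<^sub>F t in at_right 0. a < Delta_param t x"
    proof (cases "0 < a")
      case True
      then have "\<forall>\<^sub>F t in at_right 0. traj_q a t < x"
        using order_tendstoD(2)[OF traj] \<open>a < x + 2\<close> assms by simp
      then show ?thesis
        using pos by eventually_elim (simp add: less_Delta_param_iff assms True)
    next
      case False
      show ?thesis
        using pos
      proof eventually_elim
        case (elim t)
        then show ?case using Delta_param(1)[of t x] assms False by simp
      qed
    qed
  qed
qed

lemma tendsto_Delta_at_right_0:
  assumes "0 < x"
  shows "((\<lambda>t. Delta (t, x)) \<longlongrightarrow> (x, 2)) (at_right 0)"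
proof -
  have "((\<lambda>t. Dset_param (Delta_param t x)) \<longlongrightarrow> Dset_param (x + 2)) (at_right 0)"
    by (rule isCont_tendsto_compose[OF isCont_Dset_param tendsto_Delta_param_at_right_0[OF assms]])
  then show ?thesis
    using assms by (simp add: Delta_def Dset_param_def)
qed

theorem lemma5p16:
  shows "\<exists>\<Delta>. good_Delta \<Delta>
     \<and> (\<forall>\<Delta>'. good_Delta \<Delta>' \<longrightarrow> (\<forall>t x. 0 < t \<and> 0 < x \<longrightarrow> \<Delta>' (t, x) = \<Delta> (t, x)))
     \<and> continuous_on ({0<..} \<times> {0<..}) \<Delta>
     \<and> (\<forall>to xo xo' po po'. 0 < to \<and> \<Delta> (to, xo) = (0, po) \<and> \<Delta> (to, xo') = (0, po')
            \<and> 0 < xo \<and> xo < xo' \<and> xo' < qsharp to \<longrightarrow> po < po')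
     \<and> (\<forall>x>0. ((\<lambda>t. \<Delta> (t, x)) \<longlongrightarrow> (x, 2)) (at_right 0))"
proof (intro exI[of _ Delta] conjI allI impI)
  show "good_Delta Delta" by (rule good_Delta_Delta)
  show "continuous_on ({0<..} \<times> {0<..}) Delta" by (rule continuous_on_Delta)
  fix D and t x :: real assume "good_Delta D" "0 < t \<and> 0 < x"
  then show "D (t, x) = Delta (t, x)" by (simp add: good_Delta_imp_eq_Delta)
next
  fix to xo xo' po po'
  assume "0 < to \<and> Delta (to, xo) = (0, po) \<and> Delta (to, xo') = (0, po')
    \<and> 0 < xo \<and> xo < xo' \<and> xo' < qsharp to"
  then show "po < po'" using Delta_eq_Pair_0_mono[of to xo xo' po po'] by blast
next
  fix x :: real assume "0 < x"
  then show "((\<lambda>t. Delta (t, x)) \<longlongrightarrow> (x, 2)) (at_right 0)" by (rule tendsto_Delta_at_right_0)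
qed

end
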